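(* Fix a student with strict utilities $u$ over $C$ and a ROL $R$ such that, for every state $\omega$ with $B(\omega)\neq\emptyset$, the assigned school $\alpha_R(\omega)$ is defined and equals the $u$-best school in $B(\omega)$. Assume the feasible sets $B(\omega)$ do not depend on the student's own ROL. Then: (i) For any ROL $R'$, $\alpha_{R'}(\omega)$ is the $u$-best school in $B(\omega)$ for every state $\omega$ with $B(\omega)\ne\emptyset$ if and only if $R'\in\mathcal R^*(R)$. (ii) $\mathcal P^{all}(R')=\mathcal P^{all}(R)$ for every $R'\in\mathcal R^*(R)$. (iii) For any strict utility vector $u'$ on $C$ and any ROL $R''$ such that $\alpha_{R''}(\omega)$ is the $u'$-best school of $B(\omega)$ for every $\omega$ with $B(\omega)\ne\emptyset$, we have $\mathcal P^{all}(R'')=\mathcal P^{all}(R)$ if and only if $u'\in\mathcal U^*(R)$.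
   Context: Setting: finite set of schools $C$ (no outside option). $(\Omega,\Pr)$ is a probability space of states; each state determines the student's feasible set $B(\omega)\subseteq C$, taking finitely many values. A ROL is an ordered list of distinct schools of $C$. For a ROL $R$, the assigned school $\alpha_R(\omega)$ is the highest-ranked school of $R$ in $B(\omega)$ (undefined if none). $\tilde{\mathcal P}(R)=\{(\alpha_R(\omega),c):\omega\in\Omega,\ \alpha_R(\omega)\text{ defined},\ c\in B(\omega)\setminus\{\alpha_R(\omega)\}\}$ ($(x,y)$ meaning "$x$ inferred preferred to $y$"), and $\mathcal P^{all}(R)$ is the transitive closure of $\tilde{\mathcal P}(R)$. $\mathcal R^*(R)$ is the set of ROLs $R'$ such that (1) every ever-assigned school $\alpha_R(\omega)$ (over all $\omega$) is listed in $R'$, and (2) there are no schools $c,c'$ with $c'$ listed above $c$ in $R'$ and $(c,c')\in\mathcal P^{all}(R)$. For a strict utility vector $u'$, $\rho(u')$ is the ROL listing all schools of $C$ in decreasing order of $u'$; $\mathcal U^*(R)$ is the set of strict utility vectors $u'$ with $\rho(u')\in\mathcal R^*(R)$. *)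

theory Defs
  imports Complex_Main
begin

definition is_ROL :: "'c set \<Rightarrow> 'c list \<Rightarrow> bool" where
  "is_ROL C R \<longleftrightarrow> distinct R \<and> set R \<subseteq> C"

definition alpha :: "'c list \<Rightarrow> 'c set \<Rightarrow> 'c option" where
  "alpha R S = find (\<lambda>c. c \<in> S) R"

definition is_best :: "('c \<Rightarrow> real) \<Rightarrow> 'c set \<Rightarrow> 'c \<Rightarrow> bool" where
  "is_best u S c \<longleftrightarrow> c \<in> S \<and> (\<forall>c'\<in>S. u c' \<le> u c)"

text \<open>(x,y) in Ptilde: x inferred preferred to y.\<close>
definition Ptilde :: "'s set \<Rightarrow> ('s \<Rightarrow> 'c set) \<Rightarrow> 'c list \<Rightarrow> ('c \<times> 'c) set" where
  "Ptilde Omega B R = {(a, c). \<exists>\<omega>\<in>Omega. alpha R (B \<omega>) = Some a \<and> c \<in> B \<omega> \<and> c \<noteq> a}"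

definition Pall :: "'s set \<Rightarrow> ('s \<Rightarrow> 'c set) \<Rightarrow> 'c list \<Rightarrow> ('c \<times> 'c) set" where
  "Pall Omega B R = (Ptilde Omega B R)\<^sup>+"

definition listed_above :: "'c list \<Rightarrow> 'c \<Rightarrow> 'c \<Rightarrow> bool" where
  "listed_above R' c' c \<longleftrightarrow> (\<exists>i j. i < j \<and> j < length R' \<and> R' ! i = c' \<and> R' ! j = c)"

definition Rstar :: "'c set \<Rightarrow> 's set \<Rightarrow> ('s \<Rightarrow> 'c set) \<Rightarrow> 'c list \<Rightarrow> 'c list set" where
  "Rstar C Omega B R = {R'. is_ROL C R'
      \<and> (\<forall>\<omega>\<in>Omega. \<forall>a. alpha R (B \<omega>) = Some a \<longrightarrow> a \<in> set R')
      \<and> \<not> (\<exists>c c'. listed_above R' c' c \<and> (c, c') \<in> Pall Omega B R)}"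

definition rho :: "'c set \<Rightarrow> ('c \<Rightarrow> real) \<Rightarrow> 'c list" where
  "rho C u' = (THE L. set L = C \<and> sorted_wrt (\<lambda>x y. u' x > u' y) L)"

definition Ustar :: "'c set \<Rightarrow> 's set \<Rightarrow> ('s \<Rightarrow> 'c set) \<Rightarrow> 'c list \<Rightarrow> ('c \<Rightarrow> real) set" where
  "Ustar C Omega B R = {u'. inj_on u' C \<and> rho C u' \<in> Rstar C Omega B R}"

end

theory Submission
  imports Defs
begin

text \<open>
  Everything is governed by the assignment map \<open>\<omega> \<mapsto> alpha R (B \<omega>)\<close>: \<open>Pall\<close> depends on a
  list only through this map, and for a strict utility all lists that pick the best feasible
  school in every state share it. Since a list ranks its assigned school above every other
  feasible school, \<open>Pall R'\<close> never contradicts the order of \<open>R'\<close>; conversely, a list that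
  contains every school \<open>R\<close> assigns and never ranks a school above one that \<open>Pall R\<close> puts
  ahead of it assigns the same schools as \<open>R\<close>. For (iii), \<open>rho C u'\<close> is one list picking the
  \<open>u'\<close>-best schools, so \<open>R''\<close> and \<open>rho C u'\<close> have the same \<open>Pall\<close>.
\<close>

lemma alpha_SomeD:
  assumes "alpha R S = Some a"
  shows "a \<in> S" "a \<in> set R"
  using assms unfolding alpha_def find_Some_iff by auto

lemma alpha_eq_None_iff: "alpha R S = None \<longleftrightarrow> S \<inter> set R = {}"
  unfolding alpha_def find_None_iff by blast

lemma listed_above_in_set:
  assumes "listed_above R a b"
  shows "a \<in> set R" "b \<in> set R"
  using assms unfolding listed_above_def by auto

lemma listed_above_total:
  assumes "a \<in> set R" "b \<in> set R" "a \<noteq> b"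
  shows "listed_above R a b \<or> listed_above R b a"
proof -
  obtain i j where "i < length R" "R ! i = a" "j < length R" "R ! j = b"
    using assms(1,2) by (auto simp: in_set_conv_nth)
  with assms(3) show ?thesis
    unfolding listed_above_def by (metis linorder_neqE_nat)
qed

lemma listed_above_trans:
  assumes "distinct R" "listed_above R a b" "listed_above R b c"
  shows "listed_above R a c"
proof -
  obtain i j where ij: "i < j" "j < length R" "R ! i = a" "R ! j = b"
    using assms(2) unfolding listed_above_def by auto
  obtain j' k where jk: "j' < k" "k < length R" "R ! j' = b" "R ! k = c"
    using assms(3) unfolding listed_above_def by auto
  have "j' = j" using assms(1) ij jk nth_eq_iff_index_eq by (metis order.strict_trans)
  with ij jk show ?thesis unfolding listed_above_def by (metis order.strict_trans)
qed

lemma listed_above_asym: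
  assumes "distinct R" "listed_above R a b"
  shows "\<not> listed_above R b a"
proof
  assume "listed_above R b a"
  with assms have "listed_above R a a" by (rule listed_above_trans)
  then obtain i j where ij: "i < j" "j < length R" "R ! i = R ! j"
    unfolding listed_above_def by auto
  with assms(1) have "i = j" by (metis nth_eq_iff_index_eq order.strict_trans)
  with ij(1) show False by simp
qed

lemma first_in_iff_none_listed_above:
  assumes "distinct R" "k < length R" "R ! k = a"
  shows "(\<forall>j<k. R ! j \<notin> S) \<longleftrightarrow> (\<forall>b\<in>S. b \<noteq> a \<longrightarrow> \<not> listed_above R b a)"
proof
  assume first: "\<forall>j<k. R ! j \<notin> S"
  show "\<forall>b\<in>S. b \<noteq> a \<longrightarrow> \<not> listed_above R b a"
  proof (intro ballI impI notI)
    fix b assume "b \<in> S" "listed_above R b a"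
    then obtain i j where "i < j" "j < length R" "R ! i = b" "R ! j = a"
      unfolding listed_above_def by auto
    moreover from this assms have "j = k" using nth_eq_iff_index_eq by metis
    ultimately show False using first \<open>b \<in> S\<close> by blast
  qed
next
  assume none: "\<forall>b\<in>S. b \<noteq> a \<longrightarrow> \<not> listed_above R b a"
  show "\<forall>j<k. R ! j \<notin> S"
  proof (intro allI impI notI)
    fix j assume "j < k" "R ! j \<in> S"
    moreover from \<open>j < k\<close> assms have "R ! j \<noteq> a"
      using nth_eq_iff_index_eq by (metis order.strict_trans less_irrefl)
    moreover from \<open>j < k\<close> assms(2,3) have "listed_above R (R ! j) a"
      unfolding listed_above_def by blast
    ultimately show False using none by blast
  qed
qed

lemma alpha_eq_Some_iff:
  assumes "distinct R"
  shows "alpha R S = Some a \<longleftrightarrow>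
    a \<in> S \<and> a \<in> set R \<and> (\<forall>b\<in>S. b \<noteq> a \<longrightarrow> \<not> listed_above R b a)"
  unfolding alpha_def find_Some_iff in_set_conv_nth
  using first_in_iff_none_listed_above[OF assms] by blast

lemma Ptilde_imp_listed_above:
  assumes "distinct R" "(a, b) \<in> Ptilde Omega B R" "b \<in> set R"
  shows "listed_above R a b"
proof -
  obtain \<omega> where \<omega>: "alpha R (B \<omega>) = Some a" "b \<in> B \<omega>" "b \<noteq> a"
    using assms(2) unfolding Ptilde_def by auto
  then have "a \<in> set R" "\<not> listed_above R b a"
    unfolding alpha_eq_Some_iff[OF assms(1)] by auto
  with \<omega>(3) assms(3) show ?thesis using listed_above_total[of a R b] by blast
qed

lemma Ptilde_fst_in_set:
  assumes "(a, b) \<in> Ptilde Omega B R"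
  shows "a \<in> set R"
  using assms unfolding Ptilde_def by (auto dest: alpha_SomeD(2))

lemma Pall_imp_listed_above:
  assumes "distinct R" "(a, b) \<in> Pall Omega B R" "b \<in> set R"
  shows "listed_above R a b"
  using assms(2,3) unfolding Pall_def
proof (induction rule: trancl_induct)
  case (base b)
  then show ?case by (rule Ptilde_imp_listed_above[OF assms(1)])
next
  case (step b c)
  then have "listed_above R a b" using Ptilde_fst_in_set[OF step(2)] by simp
  moreover have "listed_above R b c"
    using step(2,4) by (rule Ptilde_imp_listed_above[OF assms(1)])
  ultimately show ?case by (rule listed_above_trans[OF assms(1)])
qed

lemma Pall_not_listed_above:
  assumes "distinct R" "(a, b) \<in> Pall Omega B R"
  shows "\<not> listed_above R b a"
proof
  assume "listed_above R b a"
  then have "b \<in> set R" by (rule listed_above_in_set(1))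
  then have "listed_above R a b" by (rule Pall_imp_listed_above[OF assms])
  then have "\<not> listed_above R b a" by (rule listed_above_asym[OF assms(1)])
  with \<open>listed_above R b a\<close> show False by contradiction
qed

lemma Pall_cong:
  assumes "\<And>\<omega>. \<omega> \<in> Omega \<Longrightarrow> alpha R1 (B \<omega>) = alpha R2 (B \<omega>)"
  shows "Pall Omega B R1 = Pall Omega B R2"
proof -
  have "Ptilde Omega B R1 = Ptilde Omega B R2"
    unfolding Ptilde_def using assms by auto
  then show ?thesis unfolding Pall_def by simp
qed

lemma Rstar_if_Pall_eq:
  assumes "is_ROL C R'"
    and "\<And>\<omega> a. \<omega> \<in> Omega \<Longrightarrow> alpha R (B \<omega>) = Some a \<Longrightarrow> a \<in> set R'"
    and "Pall Omega B R' = Pall Omega B R"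
  shows "R' \<in> Rstar C Omega B R"
proof -
  have "distinct R'" using assms(1) unfolding is_ROL_def by blast
  then have "\<not> listed_above R' c' c" if "(c, c') \<in> Pall Omega B R" for c c'
    using Pall_not_listed_above that assms(3) by metis
  with assms(1,2) show ?thesis unfolding Rstar_def by blast
qed

definition assigns_best :: "'s set \<Rightarrow> ('s \<Rightarrow> 'c set) \<Rightarrow> ('c \<Rightarrow> real) \<Rightarrow> 'c list \<Rightarrow> bool" where
  "assigns_best Omega B v R \<longleftrightarrow>
    (\<forall>\<omega>\<in>Omega. B \<omega> \<noteq> {} \<longrightarrow> (\<exists>a. alpha R (B \<omega>) = Some a \<and> is_best v (B \<omega>) a))"

lemma is_best_unique:
  assumes "inj_on v C" "S \<subseteq> C" "is_best v S a" "is_best v S b"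
  shows "a = b"
  using assms unfolding is_best_def inj_on_def by (metis order_antisym subsetD)

lemma assigns_best_alpha_eq:
  assumes "inj_on v C" "\<forall>\<omega>\<in>Omega. B \<omega> \<subseteq> C"
    and "assigns_best Omega B v R1" "assigns_best Omega B v R2" "\<omega> \<in> Omega"
  shows "alpha R1 (B \<omega>) = alpha R2 (B \<omega>)"
proof (cases "B \<omega> = {}")
  case True
  then have "alpha R1 (B \<omega>) = None" "alpha R2 (B \<omega>) = None"
    by (simp_all add: alpha_eq_None_iff)
  then show ?thesis by simp
next
  case False
  with assms(3-5) obtain a b where "alpha R1 (B \<omega>) = Some a" "is_best v (B \<omega>) a"
    "alpha R2 (B \<omega>) = Some b" "is_best v (B \<omega>) b"
    unfolding assigns_best_def by blast
  moreover have "B \<omega> \<subseteq> C" using assms(2,5) by blast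
  ultimately show ?thesis using is_best_unique[OF assms(1)] by metis
qed

lemma assigns_best_Pall_eq:
  assumes "inj_on v C" "\<forall>\<omega>\<in>Omega. B \<omega> \<subseteq> C"
    and "assigns_best Omega B v R1" "assigns_best Omega B v R2"
  shows "Pall Omega B R1 = Pall Omega B R2"
  using Pall_cong assigns_best_alpha_eq[OF assms] by metis

lemma assigns_best_if_Rstar:
  assumes "assigns_best Omega B v R" "R' \<in> Rstar C Omega B R"
  shows "assigns_best Omega B v R'"
  unfolding assigns_best_def
proof (intro ballI impI)
  fix \<omega> assume \<omega>: "\<omega> \<in> Omega" "B \<omega> \<noteq> {}"
  with assms(1) obtain a where a: "alpha R (B \<omega>) = Some a" "is_best v (B \<omega>) a"
    unfolding assigns_best_def by blast
  have "(a, b) \<in> Pall Omega B R" if "b \<in> B \<omega>" "b \<noteq> a" for b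
    using \<omega> a that unfolding Pall_def Ptilde_def by blast
  moreover have "distinct R'" "a \<in> set R'"
    using assms(2) \<omega>(1) a(1) unfolding Rstar_def is_ROL_def by blast+
  moreover have "\<not> listed_above R' b a" if "(a, b) \<in> Pall Omega B R" for b
    using assms(2) that unfolding Rstar_def by blast
  ultimately have "alpha R' (B \<omega>) = Some a"
    using a(2) unfolding alpha_eq_Some_iff[OF \<open>distinct R'\<close>] is_best_def by blast
  with a show "\<exists>a. alpha R' (B \<omega>) = Some a \<and> is_best v (B \<omega>) a" by blast
qed

lemma assigns_best_iff_Rstar:
  assumes "inj_on v C" "\<forall>\<omega>\<in>Omega. B \<omega> \<subseteq> C"
    and "assigns_best Omega B v R" "is_ROL C R'"
  shows "assigns_best Omega B v R' \<longleftrightarrow> R' \<in> Rstar C Omega B R"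
proof
  assume best: "assigns_best Omega B v R'"
  have alpha_eq: "alpha R' (B \<omega>) = alpha R (B \<omega>)" if "\<omega> \<in> Omega" for \<omega>
    using assigns_best_alpha_eq[OF assms(1,2) best assms(3) that] .
  have "a \<in> set R'" if "\<omega> \<in> Omega" "alpha R (B \<omega>) = Some a" for \<omega> a
    using that alpha_eq alpha_SomeD(2) by metis
  moreover have "Pall Omega B R' = Pall Omega B R"
    using alpha_eq by (rule Pall_cong)
  ultimately show "R' \<in> Rstar C Omega B R"
    by (rule Rstar_if_Pall_eq[OF assms(4)])
qed (rule assigns_best_if_Rstar[OF assms(3)])

lemma Pall_eq_if_Rstar:
  assumes "inj_on v C" "\<forall>\<omega>\<in>Omega. B \<omega> \<subseteq> C"
    and "assigns_best Omega B v R" "R' \<in> Rstar C Omega B R"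
  shows "Pall Omega B R' = Pall Omega B R"
  using assigns_best_Pall_eq[OF assms(1,2) assigns_best_if_Rstar[OF assms(3,4)] assms(3)] .

lemma sorted_wrt_utility_unique:
  fixes v :: "'c \<Rightarrow> real"
  assumes "inj_on v (set L1)"
    and "sorted_wrt (\<lambda>x y. v x > v y) L1" "sorted_wrt (\<lambda>x y. v x > v y) L2"
    and "set L1 = set L2"
  shows "L1 = L2"
proof -
  have "sorted_wrt (<) (map (\<lambda>x. - v x) L)" if "sorted_wrt (\<lambda>x y. v x > v y) L" for L
    using that by (simp add: sorted_wrt_map)
  with assms(2-4) have "map (\<lambda>x. - v x) L1 = map (\<lambda>x. - v x) L2"
    by (simp add: strict_sorted_iff sorted_distinct_set_unique)
  moreover have "inj_on (\<lambda>x. - v x) (set L1 \<union> set L2)"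
    using assms(1,4) by (simp add: inj_on_def)
  ultimately show ?thesis by (simp add: inj_on_map_eq_map)
qed

lemma ex_sorted_wrt_utility:
  fixes v :: "'c \<Rightarrow> real"
  assumes "finite C" "inj_on v C"
  shows "\<exists>L. set L = C \<and> sorted_wrt (\<lambda>x y. v x > v y) L"
proof -
  obtain xs where xs: "set xs = C" "distinct xs"
    using finite_distinct_list[OF assms(1)] by blast
  define L where "L = sort_key (\<lambda>x. - v x) xs"
  have "distinct (map (\<lambda>x. - v x) L)"
    using xs assms(2) unfolding L_def by (simp add: distinct_map inj_on_def)
  then have "sorted_wrt (<) (map (\<lambda>x. - v x) L)"
    unfolding L_def by (simp add: strict_sorted_iff)
  then have "sorted_wrt (\<lambda>x y. v x > v y) L" by (simp add: sorted_wrt_map)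
  moreover have "set L = C" using xs unfolding L_def by simp
  ultimately show ?thesis by blast
qed

lemma rho_spec:
  assumes "finite C" "inj_on v C"
  shows "set (rho C v) = C" "sorted_wrt (\<lambda>x y. v x > v y) (rho C v)"
proof -
  obtain L where L: "set L = C" "sorted_wrt (\<lambda>x y. v x > v y) L"
    using ex_sorted_wrt_utility[OF assms] by blast
  have "rho C v = L"
    unfolding rho_def
  proof (rule the_equality)
    fix L' assume "set L' = C \<and> sorted_wrt (\<lambda>x y. v x > v y) L'"
    with L assms(2) show "L' = L" using sorted_wrt_utility_unique by metis
  qed (use L in blast)
  with L show "set (rho C v) = C" "sorted_wrt (\<lambda>x y. v x > v y) (rho C v)" by simp_all
qed

lemma is_ROL_rho:
  assumes "finite C" "inj_on v C"
  shows "is_ROL C (rho C v)"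
proof -
  have "distinct L" if "sorted_wrt (\<lambda>x y. v x > v y) L" for L
    using that by (induction L) auto
  with rho_spec[OF assms] show ?thesis unfolding is_ROL_def by simp
qed

lemma rho_listed_above_less:
  assumes "finite C" "inj_on v C" "listed_above (rho C v) a b"
  shows "v b < v a"
  using assms(3) rho_spec(2)[OF assms(1,2)]
  unfolding listed_above_def sorted_wrt_iff_nth_less by blast

lemma assigns_best_rho:
  assumes "finite C" "inj_on v C" "\<forall>\<omega>\<in>Omega. B \<omega> \<subseteq> C"
  shows "assigns_best Omega B v (rho C v)"
  unfolding assigns_best_def
proof (intro ballI impI)
  fix \<omega> assume \<omega>: "\<omega> \<in> Omega" "B \<omega> \<noteq> {}"
  let ?L = "rho C v"
  have set_L: "set ?L = C" by (rule rho_spec(1)[OF assms(1,2)])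
  have distinct_L: "distinct ?L" using is_ROL_rho[OF assms(1,2)] unfolding is_ROL_def by blast
  have "B \<omega> \<inter> set ?L \<noteq> {}" using \<omega> assms(3) set_L by blast
  then obtain a where a: "alpha ?L (B \<omega>) = Some a"
    unfolding alpha_eq_None_iff[symmetric] by blast
  have "v b < v a" if "b \<in> B \<omega>" "b \<noteq> a" for b
  proof -
    have "b \<in> set ?L" using that \<omega>(1) assms(3) set_L by blast
    moreover have "a \<in> set ?L" "\<not> listed_above ?L b a"
      using a that unfolding alpha_eq_Some_iff[OF distinct_L] by auto
    ultimately have "listed_above ?L a b" using listed_above_total[of a ?L b] that(2) by blast
    then show ?thesis by (rule rho_listed_above_less[OF assms(1,2)])
  qed
  with alpha_SomeD(1)[OF a] have "is_best v (B \<omega>) a"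
    unfolding is_best_def by (metis order.order_iff_strict)
  with a show "\<exists>a. alpha ?L (B \<omega>) = Some a \<and> is_best v (B \<omega>) a" by blast
qed

lemma Pall_eq_iff_Ustar:
  assumes "finite C" "\<forall>\<omega>\<in>Omega. B \<omega> \<subseteq> C" "inj_on u C" "assigns_best Omega B u R"
    and "inj_on u' C" "assigns_best Omega B u' R''"
  shows "Pall Omega B R'' = Pall Omega B R \<longleftrightarrow> u' \<in> Ustar C Omega B R"
proof -
  let ?L = "rho C u'"
  have Pall_L: "Pall Omega B R'' = Pall Omega B ?L"
    using assigns_best_Pall_eq[OF assms(5,2,6) assigns_best_rho[OF assms(1,5,2)]] .
  have assigned_in_L: "a \<in> set ?L" if "\<omega> \<in> Omega" "alpha R (B \<omega>) = Some a" for \<omega> a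
  proof -
    have "a \<in> B \<omega>" by (rule alpha_SomeD(1)[OF that(2)])
    with assms(2) that(1) show ?thesis unfolding rho_spec(1)[OF assms(1,5)] by blast
  qed
  have "?L \<in> Rstar C Omega B R \<longleftrightarrow> Pall Omega B ?L = Pall Omega B R"
  proof
    assume "?L \<in> Rstar C Omega B R"
    then show "Pall Omega B ?L = Pall Omega B R" by (rule Pall_eq_if_Rstar[OF assms(3,2,4)])
  next
    assume "Pall Omega B ?L = Pall Omega B R"
    with assigned_in_L show "?L \<in> Rstar C Omega B R"
      by (rule Rstar_if_Pall_eq[OF is_ROL_rho[OF assms(1,5)]])
  qed
  with Pall_L assms(5) show ?thesis unfolding Ustar_def by simp
qed

theorem propositionB1:
  fixes C :: "'c set" and Omega :: "'s set" and B :: "'s \<Rightarrow> 'c set"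
    and u :: "'c \<Rightarrow> real" and R :: "'c list"
  assumes finC: "finite C"
    and BsubC: "\<forall>\<omega>\<in>Omega. B \<omega> \<subseteq> C"
    and finB: "finite (B ` Omega)"
    and strict_u: "inj_on u C"
    and ROL_R: "is_ROL C R"
    and R_best: "\<forall>\<omega>\<in>Omega. B \<omega> \<noteq> {} \<longrightarrow> (\<exists>a. alpha R (B \<omega>) = Some a \<and> is_best u (B \<omega>) a)"
  shows
    "(\<forall>R'. is_ROL C R' \<longrightarrow>
        ((\<forall>\<omega>\<in>Omega. B \<omega> \<noteq> {} \<longrightarrow> (\<exists>a. alpha R' (B \<omega>) = Some a \<and> is_best u (B \<omega>) a))
          \<longleftrightarrow> R' \<in> Rstar C Omega B R))
   \<and> (\<forall>R'\<in>Rstar C Omega B R. Pall Omega B R' = Pall Omega B R)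
   \<and> (\<forall>u' R''. inj_on u' C \<longrightarrow> is_ROL C R'' \<longrightarrow>
        (\<forall>\<omega>\<in>Omega. B \<omega> \<noteq> {} \<longrightarrow> (\<exists>a. alpha R'' (B \<omega>) = Some a \<and> is_best u' (B \<omega>) a)) \<longrightarrow>
        (Pall Omega B R'' = Pall Omega B R \<longleftrightarrow> u' \<in> Ustar C Omega B R))"
proof -
  have best: "assigns_best Omega B u R"
    using R_best unfolding assigns_best_def .
  show ?thesis
    unfolding assigns_best_def[symmetric]
  proof (intro conjI allI impI ballI)
    fix R' assume "is_ROL C R'"
    then show "assigns_best Omega B u R' \<longleftrightarrow> R' \<in> Rstar C Omega B R"
      by (rule assigns_best_iff_Rstar[OF strict_u BsubC best])
  next
    fix R' assume "R' \<in> Rstar C Omega B R"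
    then show "Pall Omega B R' = Pall Omega B R"
      by (rule Pall_eq_if_Rstar[OF strict_u BsubC best])
  next
    fix u' R'' assume "inj_on u' C" "is_ROL C R''" "assigns_best Omega B u' R''"
    then show "Pall Omega B R'' = Pall Omega B R \<longleftrightarrow> u' \<in> Ustar C Omega B R"
      using Pall_eq_iff_Ustar[OF finC BsubC strict_u best] by blast
  qed
qed

end
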